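(* Consider the procurement setting and the mechanism BFM-SWM described in the context, run with arbitrary inputs $B>0$, $\alpha>1$, $\beta>1$, $\epsilon>0$, $\ell\in\{1,2\}$. Then BFM-SWM is budget-feasible, i.e. its output $S^*$ with payments $p(u)$, $u\in S^*$, satisfies $p(S^* )=\sum_{u\in S^*}p(u)\le B$. It is obviously strategyproof (hence truthful), individually rational, and has non-negative auctioneer surplus, i.e. $v(S^* )-p(S^* )\ge 0$. Moreover, treating $\alpha$ as a constant and counting each evaluation of $v$ as one step, it runs in $\mathcal{O}\!\left(n\log\frac{OPT}{\epsilon}\right)$ time, where $OPT=\max\{v(S)-c(S): S\subseteq\mathcal{N},\ c(S)\le B\}$ is the welfare of an optimal solution.
   Context: Setting. $\mathcal{N}$ is a finite set of $n$ sellers, each owning one item. The auctioneer has a valuation $v:2^{\mathcal{N}}\to\mathbb{R}_{\ge 0}$ with $v(\emptyset)=0$ that is submodular (for $X\subseteq Y\subseteq\mathcal{N}$ and $u\notin Y$, $v(u\mid Y)\le v(u\mid X)$), not necessarily monotone, accessed through a value oracle; here $v(S\mid T)=v(S\cup T)-v(T)$, $v(u\mid T)=v(\{u\}\mid T)$ and $v(u)=v(\{u\})$. Each seller $u$ has a private cost $c(u)\ge 0$; $c(X)=\sum_{u\in X}c(u)$, $p(X)=\sum_{u\in X}p(u)$. $B>0$ is the budget, $[\ell]=\{1,\dots,\ell\}$. A seller offered a price $q$ either accepts or rejects; a truthful seller accepts iff $c(u)\le q$. A seller's utility is $p(u)-c(u)$ if it wins with payment $p(u)$ and $0$ otherwise.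 Mechanism BFM-SWM (inputs $B$, $\alpha>1$, $\beta>1$, $\epsilon>0$, $\ell\in\{1,2\}$): 1. Offer every seller the price $B$; let $R$ be the set of sellers who accept, and set $p(u)=B$ for $u\in R$. 2. Set $t=0$, $\rho_0=\epsilon/\alpha$, $u^*=\emptyset$ ($u^*$ is a set of at most one seller), and $S_{i,0}=\emptyset$ for $i\in[\ell]$. 3. Repeat rounds: set $t\leftarrow t+1$, $\rho_t=\alpha\rho_{t-1}$, $S_{i,t}=\emptyset$ for all $i\in[\ell]$. Process the sellers $u\in R\setminus(\bigcup_{i=1}^{\ell}S_{i,t-1}\cup u^* )$ one at a time in a fixed order. For each such $u$: pick $j\in\arg\max_{i\in[\ell]}v(u\mid S_{i,t})$ (current contents); update $p(u)\leftarrow\min\{p(u),\ v(u\mid S_{j,t})/(\beta+\rho_t/B)\}$ and offer $p(u)$ to $u$. If $u$ accepts: if $v(S_{j,t}\cup\{u\})-p(S_{j,t}\cup\{u\})>\rho_t$ (current prices), set $u^*\leftarrow\{u\}$ and end the round immediately; otherwise add $u$ to $S_{j,t}$. If $u$ rejects, remove $u$ from $R$. After the round, stop if $R\setminus\left(\bigcup_{i=1}^{\ell}(S_{i,t-1}\cup S_{i,t})\cup u^*\right)=\emptyset$; otherwise start another round. 4. Let $M$ be the final value of $t$. Output $S^*\in\arg\max_{A\in\{S_{i,t}: i\in[\ell],\ t\in\{M-1,M\}\}\cup\{u^*\}}\big(v(A)-p(A)\big)$, paying each $u\in S^*$ its current price $p(u)$. Obvious strategyproofness: at every point at which a seller's action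 under the truthful strategy differs from its action under some deviating strategy, the worst utility it can obtain by continuing truthfully is at least the best utility it can obtain by deviating (over all behaviours of the other sellers). Individual rationality: a truthful seller never obtains negative utility. *)

theory Defs
  imports Complex_Main "HOL-Library.Sublist"
begin

text \<open>An event of the interaction: (seller offered, price offered, seller accepted?).
  A (behaviour) strategy of a seller maps the public history of all previous events and
  the currently offered price to accept (True) / reject (False).\<close>

type_synonym 'a event = "'a \<times> real \<times> bool"
type_synonym 'a strategy = "'a event list \<Rightarrow> real \<Rightarrow> bool"

definition truthful :: "('a \<Rightarrow> real) \<Rightarrow> 'a \<Rightarrow> 'a strategy" where
  "truthful c u = (\<lambda>h q. c u \<le> q)"

definition marg :: "('a set \<Rightarrow> real) \<Rightarrow> 'a set \<Rightarrow> 'a \<Rightarrow> real" where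
  "marg v S u = v (insert u S) - v S"

definition submodular_on :: "'a set \<Rightarrow> ('a set \<Rightarrow> real) \<Rightarrow> bool" where
  "submodular_on N v \<longleftrightarrow>
     (\<forall>X Y u. X \<subseteq> Y \<longrightarrow> Y \<subseteq> N \<longrightarrow> u \<in> N \<longrightarrow> u \<notin> Y \<longrightarrow> marg v Y u \<le> marg v X u)"

text \<open>State of the mechanism.  stR = R, stp = current prices, stU = u*,
  stPrev i = S_{i,t-1}, stCur i = S_{i,t}, stTrace = history of all offers and answers,
  stSteps = number of elementary steps (value-oracle evaluations and price offers),
  stHalt = "current round has been ended early".\<close>

record 'a mstate =
  stR :: "'a set"
  stp :: "'a \<Rightarrow> real"
  stU :: "'a set"
  stPrev :: "nat \<Rightarrow> 'a set"
  stCur :: "nat \<Rightarrow> 'a set"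
  stTrace :: "'a event list"
  stSteps :: nat
  stHalt :: bool

definition offer_B :: "real \<Rightarrow> ('a \<Rightarrow> 'a strategy) \<Rightarrow> 'a mstate \<Rightarrow> 'a \<Rightarrow> 'a mstate" where
  "offer_B B \<sigma> st u =
     (let a = \<sigma> u (stTrace st) B
      in st\<lparr> stR := (if a then insert u (stR st) else stR st),
             stTrace := stTrace st @ [(u, B, a)],
             stSteps := stSteps st + 1 \<rparr>)"

definition init_state :: "'a list \<Rightarrow> real \<Rightarrow> ('a \<Rightarrow> 'a strategy) \<Rightarrow> 'a mstate" where
  "init_state ord B \<sigma> =
     fold (\<lambda>u st. offer_B B \<sigma> st u) ord
       \<lparr> stR = {}, stp = (\<lambda>_. B), stU = {}, stPrev = (\<lambda>_. {}), stCur = (\<lambda>_. {}),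
         stTrace = [], stSteps = 0, stHalt = False \<rparr>"

text \<open>Each processed seller costs
  2l + 1 oracle evaluations (the l marginals and the surplus test) plus one offer.\<close>

definition process_seller ::
  "('a set \<Rightarrow> real) \<Rightarrow> real \<Rightarrow> real \<Rightarrow> nat \<Rightarrow> real \<Rightarrow> ('a \<Rightarrow> 'a strategy)
     \<Rightarrow> 'a mstate \<Rightarrow> 'a \<Rightarrow> 'a mstate" where
  "process_seller v B \<beta> l \<rho> \<sigma> st u =
     (if stHalt st then st else
      (let S = stCur st;
           m = (\<lambda>i. marg v (S i) u);
           j = (LEAST i. 1 \<le> i \<and> i \<le> l \<and> (\<forall>k. 1 \<le> k \<and> k \<le> l \<longrightarrow> m k \<le> m i));
           q = min (stp st u) (m j / (\<beta> + \<rho> / B));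
           p' = (stp st)(u := q);
           a = \<sigma> u (stTrace st) q;
           st1 = st\<lparr> stp := p', stTrace := stTrace st @ [(u, q, a)],
                     stSteps := stSteps st + 2 * l + 2 \<rparr>
       in if a then
            (if v (insert u (S j)) - sum p' (insert u (S j)) > \<rho>
             then st1\<lparr> stU := {u}, stHalt := True \<rparr>
             else st1\<lparr> stCur := S(j := insert u (S j)) \<rparr>)
          else st1\<lparr> stR := stR st - {u} \<rparr>))"

definition run_round ::
  "('a set \<Rightarrow> real) \<Rightarrow> 'a list \<Rightarrow> real \<Rightarrow> real \<Rightarrow> real \<Rightarrow> real \<Rightarrow> nat \<Rightarrow> ('a \<Rightarrow> 'a strategy)
     \<Rightarrow> nat \<Rightarrow> 'a mstate \<Rightarrow> 'a mstate" where
  "run_round v ord B \<alpha> \<beta> \<epsilon> l \<sigma> t st =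
     (let \<rho> = \<epsilon> / \<alpha> * \<alpha> ^ t;
          todo = filter (\<lambda>u. u \<in> stR st \<and> u \<notin> (\<Union>i\<in>{1..l}. stCur st i) \<and> u \<notin> stU st) ord;
          st0 = st\<lparr> stPrev := stCur st, stCur := (\<lambda>_. {}), stHalt := False \<rparr>
      in fold (\<lambda>u s. process_seller v B \<beta> l \<rho> \<sigma> s u) todo st0)"

primrec rounds ::
  "('a set \<Rightarrow> real) \<Rightarrow> 'a list \<Rightarrow> real \<Rightarrow> real \<Rightarrow> real \<Rightarrow> real \<Rightarrow> nat \<Rightarrow> ('a \<Rightarrow> 'a strategy)
     \<Rightarrow> nat \<Rightarrow> 'a mstate" where
  "rounds v ord B \<alpha> \<beta> \<epsilon> l \<sigma> 0 = init_state ord B \<sigma>"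
| "rounds v ord B \<alpha> \<beta> \<epsilon> l \<sigma> (Suc t) =
     run_round v ord B \<alpha> \<beta> \<epsilon> l \<sigma> (Suc t) (rounds v ord B \<alpha> \<beta> \<epsilon> l \<sigma> t)"

definition stop_cond :: "nat \<Rightarrow> 'a mstate \<Rightarrow> bool" where
  "stop_cond l st \<longleftrightarrow> stR st - ((\<Union>i\<in>{1..l}. stPrev st i \<union> stCur st i) \<union> stU st) = {}"

definition num_rounds ::
  "('a set \<Rightarrow> real) \<Rightarrow> 'a list \<Rightarrow> real \<Rightarrow> real \<Rightarrow> real \<Rightarrow> real \<Rightarrow> nat \<Rightarrow> ('a \<Rightarrow> 'a strategy) \<Rightarrow> nat" where
  "num_rounds v ord B \<alpha> \<beta> \<epsilon> l \<sigma> =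
     (LEAST t. 1 \<le> t \<and> stop_cond l (rounds v ord B \<alpha> \<beta> \<epsilon> l \<sigma> t))"

definition final_state ::
  "('a set \<Rightarrow> real) \<Rightarrow> 'a list \<Rightarrow> real \<Rightarrow> real \<Rightarrow> real \<Rightarrow> real \<Rightarrow> nat \<Rightarrow> ('a \<Rightarrow> 'a strategy) \<Rightarrow> 'a mstate" where
  "final_state v ord B \<alpha> \<beta> \<epsilon> l \<sigma> =
     rounds v ord B \<alpha> \<beta> \<epsilon> l \<sigma> (num_rounds v ord B \<alpha> \<beta> \<epsilon> l \<sigma>)"

definition candidates :: "nat \<Rightarrow> 'a mstate \<Rightarrow> 'a set list" where
  "candidates l st = map (stPrev st) [1..<l+1] @ map (stCur st) [1..<l+1] @ [stU st]"

definition first_argmax :: "('b \<Rightarrow> real) \<Rightarrow> 'b list \<Rightarrow> 'b" where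
  "first_argmax f xs = hd (filter (\<lambda>A. \<forall>A'\<in>set xs. f A' \<le> f A) xs)"

definition winners ::
  "('a set \<Rightarrow> real) \<Rightarrow> 'a list \<Rightarrow> real \<Rightarrow> real \<Rightarrow> real \<Rightarrow> real \<Rightarrow> nat \<Rightarrow> ('a \<Rightarrow> 'a strategy) \<Rightarrow> 'a set" where
  "winners v ord B \<alpha> \<beta> \<epsilon> l \<sigma> =
     (let st = final_state v ord B \<alpha> \<beta> \<epsilon> l \<sigma>
      in first_argmax (\<lambda>A. v A - sum (stp st) A) (candidates l st))"

definition payment ::
  "('a set \<Rightarrow> real) \<Rightarrow> 'a list \<Rightarrow> real \<Rightarrow> real \<Rightarrow> real \<Rightarrow> real \<Rightarrow> nat \<Rightarrow> ('a \<Rightarrow> 'a strategy) \<Rightarrow> 'a \<Rightarrow> real" where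
  "payment v ord B \<alpha> \<beta> \<epsilon> l \<sigma> = stp (final_state v ord B \<alpha> \<beta> \<epsilon> l \<sigma>)"

definition mech_trace ::
  "('a set \<Rightarrow> real) \<Rightarrow> 'a list \<Rightarrow> real \<Rightarrow> real \<Rightarrow> real \<Rightarrow> real \<Rightarrow> nat \<Rightarrow> ('a \<Rightarrow> 'a strategy) \<Rightarrow> 'a event list" where
  "mech_trace v ord B \<alpha> \<beta> \<epsilon> l \<sigma> = stTrace (final_state v ord B \<alpha> \<beta> \<epsilon> l \<sigma>)"

text \<open>Total running time: elementary steps of all rounds plus one oracle evaluation per
  candidate in the final selection.\<close>

definition total_steps ::
  "('a set \<Rightarrow> real) \<Rightarrow> 'a list \<Rightarrow> real \<Rightarrow> real \<Rightarrow> real \<Rightarrow> real \<Rightarrow> nat \<Rightarrow> ('a \<Rightarrow> 'a strategy) \<Rightarrow> nat" where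
  "total_steps v ord B \<alpha> \<beta> \<epsilon> l \<sigma> =
     (let st = final_state v ord B \<alpha> \<beta> \<epsilon> l \<sigma> in stSteps st + length (candidates l st))"

definition seller_util ::
  "('a set \<Rightarrow> real) \<Rightarrow> 'a list \<Rightarrow> real \<Rightarrow> real \<Rightarrow> real \<Rightarrow> real \<Rightarrow> nat \<Rightarrow> ('a \<Rightarrow> real)
     \<Rightarrow> ('a \<Rightarrow> 'a strategy) \<Rightarrow> 'a \<Rightarrow> real" where
  "seller_util v ord B \<alpha> \<beta> \<epsilon> l c \<sigma> u =
     (if u \<in> winners v ord B \<alpha> \<beta> \<epsilon> l \<sigma> then payment v ord B \<alpha> \<beta> \<epsilon> l \<sigma> u - c u else 0)"

definition own_view :: "'a \<Rightarrow> 'a event list \<Rightarrow> 'a event list" where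
  "own_view u h = filter (\<lambda>e. fst e = u) h"

text \<open>Obvious strategyproofness.  A decision point of u is given by the history before the
  offer together with the offered price q.  Two histories are indistinguishable for u if
  u's own view of them coincides.  Whenever u is at such a point both in a run where u
  is truthful (others behave as in \<sigma>1) and in a run where u follows the deviation d
  (others behave as in \<sigma>2), and d's action there differs from the truthful one, the
  truthful utility is at least the deviating one.  Quantifying over all \<sigma>1, \<sigma>2 gives
  "worst truthful \<ge> best deviating".\<close>

definition OSP ::
  "'a set \<Rightarrow> ('a set \<Rightarrow> real) \<Rightarrow> 'a list \<Rightarrow> real \<Rightarrow> real \<Rightarrow> real \<Rightarrow> real \<Rightarrow> nat \<Rightarrow> ('a \<Rightarrow> real) \<Rightarrow> bool" where
  "OSP N v ord B \<alpha> \<beta> \<epsilon> l c \<longleftrightarrow>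
     (\<forall>u\<in>N. \<forall>d \<sigma>1 \<sigma>2 h1 h2 q b1 b2.
        prefix (h1 @ [(u, q, b1)]) (mech_trace v ord B \<alpha> \<beta> \<epsilon> l (\<sigma>1(u := truthful c u))) \<and>
        prefix (h2 @ [(u, q, b2)]) (mech_trace v ord B \<alpha> \<beta> \<epsilon> l (\<sigma>2(u := d))) \<and>
        own_view u h1 = own_view u h2 \<and>
        d h2 q \<noteq> truthful c u h1 q
        \<longrightarrow> seller_util v ord B \<alpha> \<beta> \<epsilon> l c (\<sigma>2(u := d)) u
              \<le> seller_util v ord B \<alpha> \<beta> \<epsilon> l c (\<sigma>1(u := truthful c u)) u)"

definition OPT :: "'a set \<Rightarrow> ('a set \<Rightarrow> real) \<Rightarrow> ('a \<Rightarrow> real) \<Rightarrow> real \<Rightarrow> real" where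
  "OPT N v c B = Max {v S - sum c S | S. S \<subseteq> N \<and> sum c S \<le> B}"

definition valid_instance ::
  "'a set \<Rightarrow> 'a list \<Rightarrow> ('a set \<Rightarrow> real) \<Rightarrow> ('a \<Rightarrow> real) \<Rightarrow> real \<Rightarrow> real \<Rightarrow> real \<Rightarrow> real \<Rightarrow> nat \<Rightarrow> bool" where
  "valid_instance N ord v c B \<alpha> \<beta> \<epsilon> l \<longleftrightarrow>
     distinct ord \<and> set ord = N \<and>
     v {} = 0 \<and> (\<forall>S\<subseteq>N. 0 \<le> v S) \<and> submodular_on N v \<and>
     (\<forall>u\<in>N. 0 \<le> c u) \<and>
     0 < B \<and> 1 < \<alpha> \<and> 1 < \<beta> \<and> 0 < \<epsilon> \<and> l \<in> {1, 2}"

end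

theory Submission
  imports Defs
begin

(*
  Prices only decrease during a run and a winner is paid its current price, which is at most
  every price it accepted, so a truthful seller never ends with negative utility. A seller that
  answers some offer untruthfully either rejected a price covering its cost, and is then excluded
  for good, or accepted a price below its cost, which then bounds its payment: its utility is at
  most 0. A seller that never answers untruthfully reproduces the run of the truthful profile,
  because a run depends on the strategies only through the recorded answers.

  Every set S kept in a round with threshold rho satisfies (beta + rho/B) p(S) <= v(S) and
  v(S) - p(S) <= rho, which together force p(S) <= B, and the seller in u* is priced at most
  its own value. Hence every candidate is within budget and the best one has non-negative surplus.

  A round ends early only when the surplus of some S + u exceeds rho_t. Prices never fall below
  -max v, which bounds this surplus for all strategy profiles and yields termination. With
  truthful sellers submodularity bounds it by (v(S) - c(S)) + (v(u) - c(u)) <= 2 OPT, so only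
  O(log(OPT/eps)) rounds end early; a round that does not end early triggers the stopping rule,
  and each round takes O(n) steps.
*)

lemma sum_fun_upd_notin: "u \<notin> A \<Longrightarrow> sum (f(u := q)) A = sum f A"
  by (rule sum.cong) auto

lemma min_zero_le_divide:
  fixes m d :: real
  assumes "1 \<le> d"
  shows "min m 0 \<le> m / d"
proof (cases "m < 0")
  case True
  then show ?thesis
    using assms mult_left_mono_neg[of 1 d m] by (simp add: le_divide_eq)
qed (use assms in simp)

lemma divide_le_max_zero:
  fixes m d :: real
  assumes "1 \<le> d"
  shows "m / d \<le> max m 0"
proof (cases "m < 0")
  case False
  then show ?thesis
    using assms mult_right_mono[of 1 d m] by (simp add: divide_le_eq mult.commute)
qed (use assms in \<open>simp add: divide_le_eq\<close>)

lemma le_budget_if_ratio_and_slack: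
  fixes P V \<beta> \<rho> B :: real
  assumes "1 \<le> \<beta>" "0 < \<rho>" "0 < B" "(\<beta> + \<rho> / B) * P \<le> V" "V - P \<le> \<rho>"
  shows "P \<le> B"
proof (rule ccontr)
  assume "\<not> P \<le> B"
  then have "\<rho> < \<rho> / B * P" and "P \<le> \<beta> * P"
    using assms(1-3) by (simp_all add: field_simps)
  then show False
    using assms(4,5) by (simp add: algebra_simps)
qed

lemma Least_argmax_in_range:
  fixes f :: "nat \<Rightarrow> real"
  assumes "1 \<le> l"
  shows "(LEAST i. 1 \<le> i \<and> i \<le> l \<and> (\<forall>k. 1 \<le> k \<and> k \<le> l \<longrightarrow> f k \<le> f i)) \<in> {1..l}"
proof -
  obtain i where i: "i \<in> {1..l}" "f i = Max (f ` {1..l})"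
    using Max_in[of "f ` {1..l}"] assms by fastforce
  then have "\<exists>i. 1 \<le> i \<and> i \<le> l \<and> (\<forall>k. 1 \<le> k \<and> k \<le> l \<longrightarrow> f k \<le> f i)"
    by auto
  from LeastI_ex[OF this] show ?thesis
    by auto
qed

lemma first_argmax_mem_max:
  fixes f :: "'b \<Rightarrow> real"
  assumes "xs \<noteq> []"
  shows "first_argmax f xs \<in> set xs" and "\<forall>A\<in>set xs. f A \<le> f (first_argmax f xs)"
proof -
  obtain A where A: "A \<in> set xs" "f A = Max (f ` set xs)"
    using Max_in[of "f ` set xs"] assms by fastforce
  then have "\<forall>A'\<in>set xs. f A' \<le> f A"
    by simp
  with A(1) have "filter (\<lambda>A. \<forall>A'\<in>set xs. f A' \<le> f A) xs \<noteq> []"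
    by (auto simp: filter_empty_conv)
  then have "first_argmax f xs \<in> set (filter (\<lambda>A. \<forall>A'\<in>set xs. f A' \<le> f A) xs)"
    unfolding first_argmax_def by (rule hd_in_set)
  then show "first_argmax f xs \<in> set xs" and "\<forall>A\<in>set xs. f A \<le> f (first_argmax f xs)"
    by auto
qed

lemma exponent_le_log_bound:
  fixes \<alpha> \<epsilon> x :: real
  assumes "1 < \<alpha>" "0 < \<epsilon>" "\<epsilon> * \<alpha> ^ t < 2 * x"
  shows "real t \<le> 2 * max 1 (ln (x / \<epsilon>)) / ln \<alpha>"
proof -
  have pow_pos: "0 < \<alpha> ^ t"
    using assms(1) by simp
  then have "0 < \<epsilon> * \<alpha> ^ t"
    using assms(2) by simp
  then have "0 < x / \<epsilon>"
    using assms(2,3) by simp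
  moreover have "\<alpha> ^ t < 2 * (x / \<epsilon>)"
    using assms(2,3) by (simp add: field_simps)
  ultimately have "ln (\<alpha> ^ t) < ln (2 * (x / \<epsilon>))"
    using pow_pos by simp
  also have "\<dots> = ln 2 + ln (x / \<epsilon>)"
    using \<open>0 < x / \<epsilon>\<close> by (intro ln_mult_pos) simp_all
  finally have "ln (\<alpha> ^ t) < ln 2 + ln (x / \<epsilon>)" .
  then have "real t * ln \<alpha> < ln 2 + ln (x / \<epsilon>)"
    by (simp add: ln_realpow)
  also have "\<dots> \<le> 2 * max 1 (ln (x / \<epsilon>))"
    using ln_2_less_1 by linarith
  finally show ?thesis
    using assms(1) by (simp add: pos_le_divide_eq)
qed

section \<open>Answers determine the run\<close>

definition follows_strategy :: "('a \<Rightarrow> 'a strategy) \<Rightarrow> 'a event list \<Rightarrow> bool" where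
  "follows_strategy \<sigma> tr \<longleftrightarrow>
     (\<forall>k<length tr. snd (snd (tr ! k)) = \<sigma> (fst (tr ! k)) (take k tr) (fst (snd (tr ! k))))"

lemma follows_strategy_prefix:
  assumes "prefix tr tr'" "follows_strategy \<sigma> tr'"
  shows "follows_strategy \<sigma> tr"
proof -
  obtain zs where tr': "tr' = tr @ zs"
    using assms(1) by (auto simp: prefix_def)
  show ?thesis
    unfolding follows_strategy_def
  proof (intro allI impI)
    fix k
    assume "k < length tr"
    with assms(2) show "snd (snd (tr ! k)) = \<sigma> (fst (tr ! k)) (take k tr) (fst (snd (tr ! k)))"
      unfolding follows_strategy_def tr' by (auto simp: nth_append dest: spec[of _ k])
  qed
qed

lemma follows_strategy_snoc:
  "follows_strategy \<sigma> (tr @ [(u, q, a)]) \<longleftrightarrow> follows_strategy \<sigma> tr \<and> a = \<sigma> u tr q"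
  by (auto simp: follows_strategy_def nth_append less_Suc_eq)

lemma follows_strategy_truthful_update:
  assumes "follows_strategy (\<sigma>(u := d)) tr" and "\<forall>q b. (u, q, b) \<in> set tr \<longrightarrow> b = (c u \<le> q)"
  shows "follows_strategy (\<sigma>(u := truthful c u)) tr"
  unfolding follows_strategy_def
proof (intro allI impI)
  fix k
  assume k: "k < length tr"
  obtain w q b where e: "tr ! k = (w, q, b)"
    by (cases "tr ! k") auto
  have "b = (\<sigma>(u := d)) w (take k tr) q"
    using assms(1) k e unfolding follows_strategy_def by (metis fst_conv snd_conv)
  moreover have "w = u \<Longrightarrow> b = (c u \<le> q)"
    using assms(2) k e by (metis nth_mem)
  ultimately show "snd (snd (tr ! k)) = (\<sigma>(u := truthful c u)) (fst (tr ! k)) (take k tr) (fst (snd (tr ! k)))"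
    using e by (cases "w = u") (simp_all add: truthful_def)
qed

lemma fold_prefix_trace:
  assumes "\<And>s x. prefix (tr s) (tr (f s x))"
  shows "prefix (tr s) (tr (fold (\<lambda>x s. f s x) xs s))"
  using assms by (induction xs arbitrary: s) (auto intro: prefix_order.trans)

lemma fold_eq_if_follows:
  assumes step: "\<And>s x. follows_strategy \<sigma>' (tr (f s x)) \<Longrightarrow> g s x = f s x"
    and grows: "\<And>s x. prefix (tr s) (tr (f s x))"
    and "follows_strategy \<sigma>' (tr (fold (\<lambda>x s. f s x) xs s))"
  shows "fold (\<lambda>x s. g s x) xs s = fold (\<lambda>x s. f s x) xs s"
  using assms(3)
proof (induction xs arbitrary: s)
  case (Cons x xs)
  then have "follows_strategy \<sigma>' (tr (f s x))"
    using follows_strategy_prefix fold_prefix_trace[where tr = tr and f = f, OF grows] by fastforce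
  with Cons show ?case
    by (simp add: step)
qed simp

locale bfm_run =
  fixes v :: "'a set \<Rightarrow> real" and ord :: "'a list" and B \<alpha> \<beta> \<epsilon> :: real and l :: nat
begin

abbreviation process :: "real \<Rightarrow> ('a \<Rightarrow> 'a strategy) \<Rightarrow> 'a mstate \<Rightarrow> 'a \<Rightarrow> 'a mstate" where
  "process \<rho> \<sigma> s u \<equiv> process_seller v B \<beta> l \<rho> \<sigma> s u"

abbreviation sweep :: "real \<Rightarrow> ('a \<Rightarrow> 'a strategy) \<Rightarrow> 'a list \<Rightarrow> 'a mstate \<Rightarrow> 'a mstate" where
  "sweep \<rho> \<sigma> xs s \<equiv> fold (\<lambda>u s. process \<rho> \<sigma> s u) xs s"

abbreviation screen :: "('a \<Rightarrow> 'a strategy) \<Rightarrow> 'a list \<Rightarrow> 'a mstate \<Rightarrow> 'a mstate" where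
  "screen \<sigma> xs s \<equiv> fold (\<lambda>u s. offer_B B \<sigma> s u) xs s"

abbreviation run :: "('a \<Rightarrow> 'a strategy) \<Rightarrow> nat \<Rightarrow> 'a mstate" where
  "run \<sigma> t \<equiv> rounds v ord B \<alpha> \<beta> \<epsilon> l \<sigma> t"

abbreviation last_round :: "('a \<Rightarrow> 'a strategy) \<Rightarrow> nat" where
  "last_round \<sigma> \<equiv> num_rounds v ord B \<alpha> \<beta> \<epsilon> l \<sigma>"

abbreviation final :: "('a \<Rightarrow> 'a strategy) \<Rightarrow> 'a mstate" where
  "final \<sigma> \<equiv> final_state v ord B \<alpha> \<beta> \<epsilon> l \<sigma>"

definition rho :: "nat \<Rightarrow> real" where
  "rho t = \<epsilon> / \<alpha> * \<alpha> ^ t"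

definition pending :: "'a mstate \<Rightarrow> 'a list" where
  "pending st = filter (\<lambda>u. u \<in> stR st \<and> u \<notin> (\<Union>i\<in>{1..l}. stCur st i) \<and> u \<notin> stU st) ord"

definition round_start :: "'a mstate \<Rightarrow> 'a mstate" where
  "round_start st = st\<lparr>stPrev := stCur st, stCur := (\<lambda>_. {}), stHalt := False\<rparr>"

lemma run_round_eq:
  "run_round v ord B \<alpha> \<beta> \<epsilon> l \<sigma> t st = sweep (rho t) \<sigma> (pending st) (round_start st)"
  unfolding run_round_def rho_def pending_def round_start_def Let_def ..

definition best_slot :: "'a mstate \<Rightarrow> 'a \<Rightarrow> nat" where
  "best_slot s u =
     (LEAST i. 1 \<le> i \<and> i \<le> l \<and> (\<forall>k. 1 \<le> k \<and> k \<le> l \<longrightarrow> marg v (stCur s k) u \<le> marg v (stCur s i) u))"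

definition offer_price :: "real \<Rightarrow> 'a mstate \<Rightarrow> 'a \<Rightarrow> real" where
  "offer_price \<rho> s u = min (stp s u) (marg v (stCur s (best_slot s u)) u / (\<beta> + \<rho> / B))"

definition offered :: "real \<Rightarrow> ('a \<Rightarrow> 'a strategy) \<Rightarrow> 'a mstate \<Rightarrow> 'a \<Rightarrow> 'a mstate" where
  "offered \<rho> \<sigma> s u =
     (let q = offer_price \<rho> s u
      in s\<lparr>stp := (stp s)(u := q), stTrace := stTrace s @ [(u, q, \<sigma> u (stTrace s) q)],
           stSteps := stSteps s + 2 * l + 2\<rparr>)"

lemma offered_simps [simp]:
  "stp (offered \<rho> \<sigma> s u) = (stp s)(u := offer_price \<rho> s u)"
  "stTrace (offered \<rho> \<sigma> s u) =
     stTrace s @ [(u, offer_price \<rho> s u, \<sigma> u (stTrace s) (offer_price \<rho> s u))]"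
  "stSteps (offered \<rho> \<sigma> s u) = stSteps s + 2 * l + 2"
  "stR (offered \<rho> \<sigma> s u) = stR s" "stU (offered \<rho> \<sigma> s u) = stU s"
  "stCur (offered \<rho> \<sigma> s u) = stCur s" "stPrev (offered \<rho> \<sigma> s u) = stPrev s"
  "stHalt (offered \<rho> \<sigma> s u) = stHalt s"
  by (simp_all add: offered_def Let_def)

lemma sum_offered_notin: "u \<notin> A \<Longrightarrow> sum (stp (offered \<rho> \<sigma> s u)) A = sum (stp s) A"
  unfolding offered_simps by (rule sum_fun_upd_notin)

definition overshoots :: "real \<Rightarrow> 'a mstate \<Rightarrow> 'a \<Rightarrow> bool" where
  "overshoots \<rho> s u \<longleftrightarrow>
     \<rho> < v (insert u (stCur s (best_slot s u)))
          - sum ((stp s)(u := offer_price \<rho> s u)) (insert u (stCur s (best_slot s u)))"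

lemma process_halted: "stHalt s \<Longrightarrow> process \<rho> \<sigma> s u = s"
  unfolding process_seller_def by simp

lemma process_eq:
  assumes "\<not> stHalt s"
  shows "process \<rho> \<sigma> s u =
    (if \<sigma> u (stTrace s) (offer_price \<rho> s u) then
       if overshoots \<rho> s u then (offered \<rho> \<sigma> s u)\<lparr>stU := {u}, stHalt := True\<rparr>
       else (offered \<rho> \<sigma> s u)\<lparr>stCur := (stCur s)(best_slot s u := insert u (stCur s (best_slot s u)))\<rparr>
     else (offered \<rho> \<sigma> s u)\<lparr>stR := stR s - {u}\<rparr>)"
  using assms
  unfolding process_seller_def offered_def overshoots_def offer_price_def best_slot_def Let_def
  by simp

lemma trace_process:
  "stTrace (process \<rho> \<sigma> s u) = (if stHalt s then stTrace s else stTrace (offered \<rho> \<sigma> s u))"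
  by (simp add: process_halted process_eq)

lemma prefix_trace_process: "prefix (stTrace s) (stTrace (process \<rho> \<sigma> s u))"
  by (simp add: trace_process)

lemma steps_process: "stSteps (process \<rho> \<sigma> s u) \<le> stSteps s + (2 * l + 2)"
  by (cases "stHalt s") (simp_all add: process_halted process_eq)

lemma process_eq_if_follows:
  assumes "follows_strategy \<sigma>' (stTrace (process \<rho> \<sigma> s u))"
  shows "process \<rho> \<sigma>' s u = process \<rho> \<sigma> s u"
proof (cases "stHalt s")
  case False
  then have "\<sigma>' u (stTrace s) (offer_price \<rho> s u) = \<sigma> u (stTrace s) (offer_price \<rho> s u)"
    using assms by (simp add: trace_process follows_strategy_snoc)
  with False show ?thesis
    by (simp add: process_eq offered_def)
qed (simp add: process_halted)

lemma prefix_trace_run: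
  assumes "t \<le> T"
  shows "prefix (stTrace (run \<sigma> t)) (stTrace (run \<sigma> T))"
  using assms
proof (induction T)
  case (Suc T)
  have "prefix (stTrace (round_start st)) (stTrace (sweep \<rho> \<sigma> xs (round_start st)))" for \<rho> xs st
    by (rule fold_prefix_trace[where tr = stTrace and f = "process \<rho> \<sigma>"]) (rule prefix_trace_process)
  then have "prefix (stTrace (run \<sigma> T)) (stTrace (run \<sigma> (Suc T)))"
    by (simp add: run_round_eq round_start_def)
  with Suc show ?case
    by (cases "t = Suc T") (auto intro: prefix_order.trans)
qed simp

lemma run_eq_if_follows:
  assumes "follows_strategy \<sigma>' (stTrace (run \<sigma> T))" and "t \<le> T"
  shows "run \<sigma>' t = run \<sigma> t"
  using assms(2)
proof (induction t)
  case 0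
  have "follows_strategy \<sigma>' (stTrace (run \<sigma> 0))"
    using follows_strategy_prefix[OF prefix_trace_run assms(1)] by blast
  moreover have "follows_strategy \<sigma>' (stTrace (offer_B B \<sigma> s u)) \<Longrightarrow> offer_B B \<sigma>' s u = offer_B B \<sigma> s u"
    for s u
    by (simp add: offer_B_def Let_def follows_strategy_snoc)
  ultimately show ?case
    unfolding rounds.simps init_state_def
    by (intro fold_eq_if_follows[where tr = stTrace]) (simp_all add: offer_B_def Let_def)
next
  case (Suc t)
  have run_Suc: "run \<sigma> (Suc t) = sweep (rho (Suc t)) \<sigma> (pending (run \<sigma> t)) (round_start (run \<sigma> t))"
    by (simp add: run_round_eq)
  have "follows_strategy \<sigma>' (stTrace (run \<sigma> (Suc t)))"
    using follows_strategy_prefix[OF prefix_trace_run[OF Suc.prems] assms(1)] .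
  then have "sweep (rho (Suc t)) \<sigma>' (pending (run \<sigma> t)) (round_start (run \<sigma> t)) = run \<sigma> (Suc t)"
    unfolding run_Suc
    by (intro fold_eq_if_follows[where tr = stTrace] process_eq_if_follows prefix_trace_process)
  then show ?case
    using Suc by (simp add: run_round_eq)
qed

end

section \<open>Invariants of a run\<close>

locale bfm = bfm_run +
  fixes N :: "'a set" and c :: "'a \<Rightarrow> real"
  assumes valid: "valid_instance N ord v c B \<alpha> \<beta> \<epsilon> l"
begin

lemma distinct_ord: "distinct ord" and set_ord: "set ord = N" and finite_N: "finite N"
  and v_empty: "v {} = 0" and v_nonneg: "\<And>S. S \<subseteq> N \<Longrightarrow> 0 \<le> v S"
  and submodular: "submodular_on N v" and B_pos: "0 < B" and alpha_gt_1: "1 < \<alpha>"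
  and beta_gt_1: "1 < \<beta>" and eps_pos: "0 < \<epsilon>" and l_ge_1: "1 \<le> l" and l_le_2: "l \<le> 2"
  using valid unfolding valid_instance_def by auto

definition Vmax :: real where
  "Vmax = Max (v ` Pow N)"

lemma le_Vmax: "S \<subseteq> N \<Longrightarrow> v S \<le> Vmax"
  unfolding Vmax_def using finite_N by (intro Max_ge) auto

lemma Vmax_nonneg: "0 \<le> Vmax"
  using le_Vmax[of "{}"] v_empty by simp

lemma le_OPT: "S \<subseteq> N \<Longrightarrow> sum c S \<le> B \<Longrightarrow> v S - sum c S \<le> OPT N v c B"
  unfolding OPT_def by (rule Max_ge) (use finite_N in auto)

lemma marg_le_singleton: "S \<subseteq> N \<Longrightarrow> u \<in> N \<Longrightarrow> u \<notin> S \<Longrightarrow> marg v S u \<le> v {u}"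
  using submodular v_empty unfolding submodular_on_def marg_def
  by (metis empty_subsetI insert_absorb2 insert_is_Un sup_bot.right_neutral diff_zero)

lemma rho_pos: "0 < rho t"
  unfolding rho_def using eps_pos alpha_gt_1 by simp

lemma rho_Suc: "rho (Suc t) = \<epsilon> * \<alpha> ^ t"
  unfolding rho_def using alpha_gt_1 by simp

lemma best_slot_in_range: "best_slot s u \<in> {1..l}"
  unfolding best_slot_def by (rule Least_argmax_in_range[OF l_ge_1])

lemma surplus_le_Vmax_bound:
  assumes "A \<subseteq> N" and "\<forall>w\<in>A. - Vmax \<le> p w"
  shows "v A - sum p A \<le> Vmax * (1 + real (card N))"
proof -
  have "real (card A) * (- Vmax) \<le> sum p A"
    using assms(2) by (intro sum_bounded_below) auto
  moreover have "real (card A) * Vmax \<le> real (card N) * Vmax"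
    using card_mono[OF finite_N assms(1)] Vmax_nonneg by (intro mult_right_mono) auto
  ultimately show ?thesis
    using le_Vmax[OF assms(1)] by (simp add: algebra_simps)
qed

lemma surplus_insert_le_twice_OPT:
  assumes S: "S \<subseteq> N" and u: "u \<in> N" "u \<notin> S"
    and budget: "sum p S \<le> B" and cost: "\<forall>w\<in>S. c w \<le> p w" "c u \<le> p u" "p u \<le> B"
  shows "v (insert u S) - sum p (insert u S) \<le> 2 * OPT N v c B"
proof -
  have "finite S"
    using S finite_N finite_subset by blast
  then have sum_insert: "sum p (insert u S) = p u + sum p S"
    using u(2) by simp
  have "sum c S \<le> sum p S"
    using cost(1) by (intro sum_mono) auto
  then have "v S - sum c S \<le> OPT N v c B"
    using le_OPT[OF S] budget by simp
  moreover have "v {u} - c u \<le> OPT N v c B"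
    using le_OPT[of "{u}"] u cost(2,3) by simp
  moreover have "v (insert u S) \<le> v S + v {u}"
    using marg_le_singleton[OF S u] by (simp add: marg_def)
  ultimately show ?thesis
    using sum_insert \<open>sum c S \<le> sum p S\<close> cost(2) by linarith
qed

definition selected :: "'a mstate \<Rightarrow> 'a set" where
  "selected s = stU s \<union> (\<Union>i\<in>{1..l}. stCur s i \<union> stPrev s i)"

definition sets_within_N :: "'a mstate \<Rightarrow> bool" where
  "sets_within_N s \<longleftrightarrow> (\<forall>i. stCur s i \<subseteq> N \<and> stPrev s i \<subseteq> N) \<and> stU s \<subseteq> N \<and> stR s \<subseteq> N"

definition prices_bounded :: "'a mstate \<Rightarrow> bool" where
  "prices_bounded s \<longleftrightarrow> (\<forall>w. - Vmax \<le> stp s w \<and> stp s w \<le> B)"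

definition within_budget :: "'a mstate \<Rightarrow> bool" where
  "within_budget s \<longleftrightarrow> (\<forall>i\<in>{1..l}. sum (stp s) (stCur s i) \<le> B \<and> sum (stp s) (stPrev s i) \<le> B)"

definition u_star_ok :: "'a mstate \<Rightarrow> bool" where
  "u_star_ok s \<longleftrightarrow> stU s = {} \<or> (\<exists>w. stU s = {w} \<and> stp s w \<le> v {w})"

definition prices_below_offers :: "'a mstate \<Rightarrow> bool" where
  "prices_below_offers s \<longleftrightarrow> (\<forall>e\<in>set (stTrace s). stp s (fst e) \<le> fst (snd e))"

definition rejected_excluded :: "'a mstate \<Rightarrow> bool" where
  "rejected_excluded s \<longleftrightarrow>
     (\<forall>w q. (w, q, False) \<in> set (stTrace s) \<longrightarrow> w \<notin> stR s \<and> w \<notin> selected s)"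

definition costs_covered :: "'a set \<Rightarrow> 'a mstate \<Rightarrow> bool" where
  "costs_covered X s \<longleftrightarrow> (\<forall>w\<in>X. w \<in> selected s \<longrightarrow> c w \<le> stp s w)"

text \<open>\<open>X\<close> is a set of sellers known to play truthfully; only \<open>costs_covered\<close> depends on it.\<close>

definition sound_state :: "'a set \<Rightarrow> ('a \<Rightarrow> 'a strategy) \<Rightarrow> 'a mstate \<Rightarrow> bool" where
  "sound_state X \<sigma> s \<longleftrightarrow>
     sets_within_N s \<and> prices_bounded s \<and> within_budget s \<and> u_star_ok s \<and>
     follows_strategy \<sigma> (stTrace s) \<and> prices_below_offers s \<and> rejected_excluded s \<and>
     costs_covered X s"

definition slack_ok :: "real \<Rightarrow> 'a mstate \<Rightarrow> bool" where
  "slack_ok \<rho> s \<longleftrightarrow>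
     (\<forall>i\<in>{1..l}. (\<beta> + \<rho> / B) * sum (stp s) (stCur s i) \<le> v (stCur s i) \<and>
                 v (stCur s i) - sum (stp s) (stCur s i) \<le> \<rho>)"

definition pending_ok :: "'a list \<Rightarrow> 'a mstate \<Rightarrow> bool" where
  "pending_ok xs s \<longleftrightarrow> distinct xs \<and> (\<forall>w\<in>set xs. w \<in> stR s \<and> w \<notin> selected s)"

text \<open>Bounds on \<open>\<rho>\<close> once a round has ended early: the first yields termination under any
  strategy profile, the second the logarithmic number of rounds under truthful play.\<close>

definition halt_bound :: "real \<Rightarrow> 'a set \<Rightarrow> 'a mstate \<Rightarrow> bool" where
  "halt_bound \<rho> X s \<longleftrightarrow>
     (stHalt s \<longrightarrow> \<rho> < Vmax * (1 + real (card N)) \<and> (N \<subseteq> X \<longrightarrow> \<rho> < 2 * OPT N v c B))"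

definition round_inv :: "real \<Rightarrow> 'a set \<Rightarrow> ('a \<Rightarrow> 'a strategy) \<Rightarrow> 'a mstate \<Rightarrow> 'a list \<Rightarrow> bool" where
  "round_inv \<rho> X \<sigma> s xs \<longleftrightarrow> sound_state X \<sigma> s \<and> slack_ok \<rho> s \<and> pending_ok xs s \<and> halt_bound \<rho> X s"

lemma slack_ok_within_budget:
  assumes "slack_ok \<rho> s" "0 < \<rho>" "i \<in> {1..l}"
  shows "sum (stp s) (stCur s i) \<le> B"
proof (rule le_budget_if_ratio_and_slack)
  show "(\<beta> + \<rho> / B) * sum (stp s) (stCur s i) \<le> v (stCur s i)"
    "v (stCur s i) - sum (stp s) (stCur s i) \<le> \<rho>"
    using assms unfolding slack_ok_def by auto
qed (use assms beta_gt_1 B_pos in auto)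

lemma pending_head:
  assumes "round_inv \<rho> X \<sigma> s (u # xs)"
  shows "u \<in> stR s" "u \<in> N" "u \<notin> selected s"
  using assms unfolding round_inv_def sound_state_def pending_ok_def sets_within_N_def by auto

lemma offer_price_bounds:
  assumes inv: "round_inv \<rho> X \<sigma> s (u # xs)" and "0 < \<rho>"
  shows "- Vmax \<le> offer_price \<rho> s u" "offer_price \<rho> s u \<le> B" "offer_price \<rho> s u \<le> v {u}"
    "offer_price \<rho> s u \<le> stp s u"
    "(\<beta> + \<rho> / B) * offer_price \<rho> s u \<le> marg v (stCur s (best_slot s u)) u"
proof -
  let ?S = "stCur s (best_slot s u)" and ?d = "\<beta> + \<rho> / B"
  let ?m = "marg v ?S u"
  have S: "?S \<subseteq> N" "u \<notin> ?S" and u: "u \<in> N"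
    and p: "- Vmax \<le> stp s u" "stp s u \<le> B"
    using inv pending_head[OF inv] best_slot_in_range
    unfolding round_inv_def sound_state_def sets_within_N_def prices_bounded_def selected_def
    by auto
  have d: "1 \<le> ?d"
    using beta_gt_1 \<open>0 < \<rho>\<close> B_pos by (simp add: add_increasing2)
  have q: "offer_price \<rho> s u = min (stp s u) (?m / ?d)"
    unfolding offer_price_def ..
  have "- Vmax \<le> ?m"
    using v_nonneg[of "insert u ?S"] le_Vmax[OF S(1)] S u by (simp add: marg_def)
  then show "- Vmax \<le> offer_price \<rho> s u"
    using min_zero_le_divide[OF d, of ?m] Vmax_nonneg p(1) q by linarith
  show "offer_price \<rho> s u \<le> B" "offer_price \<rho> s u \<le> stp s u"
    using p(2) q by auto
  show "offer_price \<rho> s u \<le> v {u}"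
    using divide_le_max_zero[OF d, of ?m] marg_le_singleton[OF S(1) u S(2)] v_nonneg[of "{u}"] u q
    by auto
  have "?d * (?m / ?d) = ?m"
    using d by simp
  then show "?d * offer_price \<rho> s u \<le> ?m"
    using d q mult_left_mono[of "offer_price \<rho> s u" "?m / ?d" ?d] by simp
qed

lemma offered_props:
  assumes inv: "round_inv \<rho> X \<sigma> s (u # xs)" and "0 < \<rho>" and truthful: "\<forall>w\<in>X. \<sigma> w = truthful c w"
  defines "s' \<equiv> offered \<rho> \<sigma> s u"
  shows "prices_bounded s'"
    and "follows_strategy \<sigma> (stTrace s')"
    and "prices_below_offers s'"
    and "\<forall>w\<in>X. w \<in> selected s \<longrightarrow> c w \<le> stp s' w"
    and "\<sigma> u (stTrace s) (offer_price \<rho> s u) \<Longrightarrow> u \<in> X \<Longrightarrow> c u \<le> stp s' u"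
proof -
  note q = offer_price_bounds[OF inv \<open>0 < \<rho>\<close>]
  have sound: "sound_state X \<sigma> s"
    using inv unfolding round_inv_def by simp
  show "prices_bounded s'"
    using sound q(1,2) unfolding s'_def sound_state_def prices_bounded_def by simp
  show "follows_strategy \<sigma> (stTrace s')"
    using sound unfolding s'_def sound_state_def by (simp add: follows_strategy_snoc)
  show "prices_below_offers s'"
    using sound q(4) unfolding s'_def sound_state_def prices_below_offers_def
    by (auto intro: order_trans)
  show "\<forall>w\<in>X. w \<in> selected s \<longrightarrow> c w \<le> stp s' w"
    using sound pending_head(3)[OF inv] unfolding s'_def sound_state_def costs_covered_def by auto
  show "\<sigma> u (stTrace s) (offer_price \<rho> s u) \<Longrightarrow> u \<in> X \<Longrightarrow> c u \<le> stp s' u"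
    using truthful unfolding s'_def by (simp add: truthful_def)
qed

lemma round_inv_reject:
  assumes inv: "round_inv \<rho> X \<sigma> s (u # xs)" and "0 < \<rho>" and truthful: "\<forall>w\<in>X. \<sigma> w = truthful c w"
  shows "round_inv \<rho> X \<sigma> ((offered \<rho> \<sigma> s u)\<lparr>stR := stR s - {u}\<rparr>) xs"
proof -
  let ?s' = "(offered \<rho> \<sigma> s u)\<lparr>stR := stR s - {u}\<rparr>"
  note off = offered_props[OF inv \<open>0 < \<rho>\<close> truthful] and head = pending_head[OF inv]
  have sound: "sound_state X \<sigma> s" and slack: "slack_ok \<rho> s" and pend: "pending_ok (u # xs) s"
    and halt: "halt_bound \<rho> X s"
    using inv unfolding round_inv_def by auto
  have sel: "selected ?s' = selected s"
    by (simp add: selected_def)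
  have sums: "sum (stp ?s') (stCur s i) = sum (stp s) (stCur s i)"
    "sum (stp ?s') (stPrev s i) = sum (stp s) (stPrev s i)" if "i \<in> {1..l}" for i
    using sum_offered_notin head(3) that by (auto simp: selected_def)
  have "sound_state X \<sigma> ?s'"
    unfolding sound_state_def
  proof (intro conjI)
    show "sets_within_N ?s'"
      using sound by (auto simp: sound_state_def sets_within_N_def)
    show "prices_bounded ?s'" "prices_below_offers ?s'"
      using off(1,3) by (simp_all add: prices_bounded_def prices_below_offers_def)
    show "within_budget ?s'"
      using sound sums by (simp add: sound_state_def within_budget_def)
    show "u_star_ok ?s'"
      using sound head(3) by (auto simp: sound_state_def u_star_ok_def selected_def)
    show "follows_strategy \<sigma> (stTrace ?s')"
      using off(2) by simp
    show "rejected_excluded ?s'"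
      using sound head(3) by (auto simp: sound_state_def rejected_excluded_def sel)
    show "costs_covered X ?s'"
      using off(4) by (simp add: costs_covered_def sel)
  qed
  moreover have "slack_ok \<rho> ?s'"
    using slack sums by (simp add: slack_ok_def)
  moreover have "pending_ok xs ?s'"
    using pend by (auto simp: pending_ok_def sel)
  moreover have "halt_bound \<rho> X ?s'"
    using halt by (simp add: halt_bound_def)
  ultimately show ?thesis
    unfolding round_inv_def by blast
qed

lemma halt_bound_overshoot:
  assumes inv: "round_inv \<rho> X \<sigma> s (u # xs)" and "0 < \<rho>" and truthful: "\<forall>w\<in>X. \<sigma> w = truthful c w"
    and accept: "\<sigma> u (stTrace s) (offer_price \<rho> s u)" and over: "overshoots \<rho> s u"
  shows "halt_bound \<rho> X ((offered \<rho> \<sigma> s u)\<lparr>stU := {u}, stHalt := True\<rparr>)"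
proof -
  let ?S = "stCur s (best_slot s u)" and ?p = "stp (offered \<rho> \<sigma> s u)"
  note off = offered_props[OF inv \<open>0 < \<rho>\<close> truthful] and head = pending_head[OF inv]
  have S: "?S \<subseteq> selected s" "?S \<subseteq> N" "u \<notin> ?S"
    using inv head(3) best_slot_in_range
    by (auto simp: round_inv_def sound_state_def sets_within_N_def selected_def)
  have gap: "\<rho> < v (insert u ?S) - sum ?p (insert u ?S)"
    using over by (simp add: overshoots_def)
  have "v (insert u ?S) - sum ?p (insert u ?S) \<le> Vmax * (1 + real (card N))"
    using S(2) head(2) off(1) by (intro surplus_le_Vmax_bound) (auto simp: prices_bounded_def)
  moreover have "v (insert u ?S) - sum ?p (insert u ?S) \<le> 2 * OPT N v c B" if "N \<subseteq> X"
  proof (rule surplus_insert_le_twice_OPT[OF S(2) head(2) S(3)])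
    have "slack_ok \<rho> s"
      using inv by (simp add: round_inv_def)
    then show "sum ?p ?S \<le> B"
      using sum_offered_notin[OF S(3)] slack_ok_within_budget \<open>0 < \<rho>\<close> best_slot_in_range by simp
    show "\<forall>w\<in>?S. c w \<le> ?p w"
      using off(4) S(1,2) that by blast
    show "c u \<le> ?p u" "?p u \<le> B"
      using off(5) accept head(2) that offer_price_bounds(2)[OF inv \<open>0 < \<rho>\<close>] by auto
  qed
  ultimately show ?thesis
    using gap by (auto simp: halt_bound_def)
qed

lemma round_inv_halt:
  assumes inv: "round_inv \<rho> X \<sigma> s (u # xs)" and "0 < \<rho>" and truthful: "\<forall>w\<in>X. \<sigma> w = truthful c w"
    and accept: "\<sigma> u (stTrace s) (offer_price \<rho> s u)" and over: "overshoots \<rho> s u"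
  shows "round_inv \<rho> X \<sigma> ((offered \<rho> \<sigma> s u)\<lparr>stU := {u}, stHalt := True\<rparr>) xs"
proof -
  let ?s' = "(offered \<rho> \<sigma> s u)\<lparr>stU := {u}, stHalt := True\<rparr>"
  note off = offered_props[OF inv \<open>0 < \<rho>\<close> truthful] and head = pending_head[OF inv]
  have sound: "sound_state X \<sigma> s" and slack: "slack_ok \<rho> s" and pend: "pending_ok (u # xs) s"
    using inv unfolding round_inv_def by auto
  have sel: "selected ?s' \<subseteq> insert u (selected s)"
    by (auto simp: selected_def)
  have sums: "sum (stp ?s') (stCur s i) = sum (stp s) (stCur s i)"
    "sum (stp ?s') (stPrev s i) = sum (stp s) (stPrev s i)" if "i \<in> {1..l}" for i
    using sum_offered_notin head(3) that by (auto simp: selected_def)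
  have "sound_state X \<sigma> ?s'"
    unfolding sound_state_def
  proof (intro conjI)
    show "sets_within_N ?s'"
      using sound head(2) by (auto simp: sound_state_def sets_within_N_def)
    show "prices_bounded ?s'" "prices_below_offers ?s'"
      using off(1,3) by (simp_all add: prices_bounded_def prices_below_offers_def)
    show "within_budget ?s'"
      using sound sums by (simp add: sound_state_def within_budget_def)
    show "u_star_ok ?s'"
      using offer_price_bounds(3)[OF inv \<open>0 < \<rho>\<close>] by (simp add: u_star_ok_def)
    show "follows_strategy \<sigma> (stTrace ?s')"
      using off(2) by simp
    show "rejected_excluded ?s'"
      using sound head(1) sel accept by (fastforce simp: sound_state_def rejected_excluded_def)
    show "costs_covered X ?s'"
      using off(4,5) sel accept by (auto simp: costs_covered_def)
  qed
  moreover have "slack_ok \<rho> ?s'"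
    using slack sums by (simp add: slack_ok_def)
  moreover have "pending_ok xs ?s'"
    using pend sel by (auto simp: pending_ok_def)
  ultimately show ?thesis
    using halt_bound_overshoot[OF assms] unfolding round_inv_def by blast
qed

lemma slack_ok_extend:
  assumes inv: "round_inv \<rho> X \<sigma> s (u # xs)" and "0 < \<rho>" and keep: "\<not> overshoots \<rho> s u"
  shows "slack_ok \<rho>
    ((offered \<rho> \<sigma> s u)\<lparr>stCur := (stCur s)(best_slot s u := insert u (stCur s (best_slot s u)))\<rparr>)"
    (is "slack_ok \<rho> ?s'")
proof -
  let ?j = "best_slot s u" and ?q = "offer_price \<rho> s u"
  have slack: "slack_ok \<rho> s"
    using inv by (simp add: round_inv_def)
  have u: "u \<notin> stCur s i" if "i \<in> {1..l}" for i
    using pending_head(3)[OF inv] that by (auto simp: selected_def)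
  have "finite (stCur s ?j)"
    using inv finite_N finite_subset by (auto simp: round_inv_def sound_state_def sets_within_N_def)
  then have sum_j: "sum (stp ?s') (stCur ?s' ?j) = ?q + sum (stp s) (stCur s ?j)"
    using u[OF best_slot_in_range] sum_offered_notin[OF u[OF best_slot_in_range]] by simp
  show ?thesis
    unfolding slack_ok_def
  proof
    fix i
    assume i: "i \<in> {1..l}"
    show "(\<beta> + \<rho> / B) * sum (stp ?s') (stCur ?s' i) \<le> v (stCur ?s' i) \<and>
        v (stCur ?s' i) - sum (stp ?s') (stCur ?s' i) \<le> \<rho>"
    proof (cases "i = ?j")
      case True
      have "(\<beta> + \<rho> / B) * sum (stp s) (stCur s ?j) \<le> v (stCur s ?j)"
        using slack best_slot_in_range by (simp add: slack_ok_def)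
      moreover have "(\<beta> + \<rho> / B) * ?q \<le> marg v (stCur s ?j) u"
        by (rule offer_price_bounds(5)[OF inv \<open>0 < \<rho>\<close>])
      ultimately show ?thesis
        using True keep sum_j by (simp add: overshoots_def marg_def algebra_simps)
    next
      case False
      then show ?thesis
        using slack i sum_offered_notin[OF u[OF i]] by (simp add: slack_ok_def)
    qed
  qed
qed

lemma round_inv_extend:
  assumes inv: "round_inv \<rho> X \<sigma> s (u # xs)" and "0 < \<rho>" and truthful: "\<forall>w\<in>X. \<sigma> w = truthful c w"
    and accept: "\<sigma> u (stTrace s) (offer_price \<rho> s u)" and keep: "\<not> overshoots \<rho> s u"
  shows "round_inv \<rho> X \<sigma>
    ((offered \<rho> \<sigma> s u)\<lparr>stCur := (stCur s)(best_slot s u := insert u (stCur s (best_slot s u)))\<rparr>) xs"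
    (is "round_inv \<rho> X \<sigma> ?s' xs")
proof -
  note off = offered_props[OF inv \<open>0 < \<rho>\<close> truthful] and head = pending_head[OF inv]
  have sound: "sound_state X \<sigma> s" and pend: "pending_ok (u # xs) s" and halt: "halt_bound \<rho> X s"
    using inv unfolding round_inv_def by auto
  have slack: "slack_ok \<rho> ?s'"
    using inv \<open>0 < \<rho>\<close> keep by (rule slack_ok_extend)
  have sel: "selected ?s' = insert u (selected s)"
    using best_slot_in_range[of s u] by (auto simp: selected_def split: if_splits)
  have "sound_state X \<sigma> ?s'"
    unfolding sound_state_def
  proof (intro conjI)
    show "sets_within_N ?s'"
      using sound head(2) by (auto simp: sound_state_def sets_within_N_def)
    show "prices_bounded ?s'" "prices_below_offers ?s'"
      using off(1,3) by (simp_all add: prices_bounded_def prices_below_offers_def)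
    show "within_budget ?s'"
      using slack_ok_within_budget[OF slack \<open>0 < \<rho>\<close>] sound sum_offered_notin head(3)
      by (auto simp: sound_state_def within_budget_def selected_def)
    show "u_star_ok ?s'"
      using sound head(3) by (auto simp: sound_state_def u_star_ok_def selected_def)
    show "follows_strategy \<sigma> (stTrace ?s')"
      using off(2) by simp
    show "rejected_excluded ?s'"
      using sound head(1) accept by (fastforce simp: sound_state_def rejected_excluded_def sel)
    show "costs_covered X ?s'"
      using off(4,5) accept by (auto simp: costs_covered_def sel)
  qed
  moreover have "pending_ok xs ?s'"
    using pend by (auto simp: pending_ok_def sel)
  moreover have "halt_bound \<rho> X ?s'"
    using halt by (simp add: halt_bound_def)
  ultimately show ?thesis
    using slack unfolding round_inv_def by blast
qed

lemma round_inv_process: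
  assumes "round_inv \<rho> X \<sigma> s (u # xs)" "0 < \<rho>" "\<forall>w\<in>X. \<sigma> w = truthful c w"
  shows "round_inv \<rho> X \<sigma> (process \<rho> \<sigma> s u) xs"
proof (cases "stHalt s")
  case True
  then show ?thesis
    using assms(1) by (simp add: process_halted round_inv_def pending_ok_def)
next
  case False
  then show ?thesis
    using round_inv_reject[OF assms] round_inv_halt[OF assms] round_inv_extend[OF assms]
    by (simp add: process_eq)
qed

lemma round_inv_sweep:
  assumes "round_inv \<rho> X \<sigma> s xs" "0 < \<rho>" "\<forall>w\<in>X. \<sigma> w = truthful c w"
  shows "round_inv \<rho> X \<sigma> (sweep \<rho> \<sigma> xs s) []"
  using assms(1) by (induction xs arbitrary: s) (simp_all add: round_inv_process assms(2,3))

lemma round_inv_round_start: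
  assumes sound: "sound_state X \<sigma> st"
  shows "round_inv (rho t) X \<sigma> (round_start st) (pending st)"
proof -
  let ?s = "round_start st"
  have sel: "selected ?s = stU st \<union> (\<Union>i\<in>{1..l}. stCur st i)"
    by (auto simp: selected_def round_start_def)
  then have sel_le: "selected ?s \<subseteq> selected st"
    by (auto simp: selected_def)
  have "sound_state X \<sigma> ?s"
    unfolding sound_state_def
  proof (intro conjI)
    show "sets_within_N ?s" "prices_bounded ?s" "u_star_ok ?s" "follows_strategy \<sigma> (stTrace ?s)"
      "prices_below_offers ?s"
      using sound
      by (simp_all add: sound_state_def sets_within_N_def prices_bounded_def u_star_ok_def
          prices_below_offers_def round_start_def)
    show "within_budget ?s"
      using sound B_pos by (simp add: sound_state_def within_budget_def round_start_def)
    show "rejected_excluded ?s" "costs_covered X ?s"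
      using sound sel_le
      by (auto simp: sound_state_def rejected_excluded_def costs_covered_def round_start_def)
  qed
  moreover have "slack_ok (rho t) ?s"
    using v_empty rho_pos[of t] by (simp add: slack_ok_def round_start_def)
  moreover have "pending_ok (pending st) ?s"
    using distinct_ord unfolding pending_ok_def sel by (auto simp: pending_def round_start_def)
  moreover have "halt_bound (rho t) X ?s"
    by (simp add: halt_bound_def round_start_def)
  ultimately show ?thesis
    unfolding round_inv_def by blast
qed

definition screen_inv :: "('a \<Rightarrow> 'a strategy) \<Rightarrow> 'a mstate \<Rightarrow> 'a list \<Rightarrow> bool" where
  "screen_inv \<sigma> s xs \<longleftrightarrow>
     stU s = {} \<and> (\<forall>i. stCur s i = {} \<and> stPrev s i = {}) \<and> stp s = (\<lambda>_. B) \<and> stR s \<subseteq> N \<and>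
     follows_strategy \<sigma> (stTrace s) \<and> (\<forall>e\<in>set (stTrace s). fst (snd e) = B) \<and>
     (\<forall>w q. (w, q, False) \<in> set (stTrace s) \<longrightarrow> w \<notin> stR s) \<and>
     distinct xs \<and> set xs \<subseteq> N \<and> (\<forall>w\<in>set xs. w \<notin> stR s \<and> (\<forall>e\<in>set (stTrace s). fst e \<noteq> w))"

lemma screen_inv_screen: "screen_inv \<sigma> s xs \<Longrightarrow> screen_inv \<sigma> (screen \<sigma> xs s) []"
proof (induction xs arbitrary: s)
  case (Cons u xs)
  then have "screen_inv \<sigma> (offer_B B \<sigma> s u) xs"
    unfolding screen_inv_def offer_B_def Let_def by (auto simp: follows_strategy_snoc)
  with Cons.IH show ?case
    by simp
qed simp

lemma sound_state_init: "sound_state X \<sigma> (init_state ord B \<sigma>)"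
proof -
  have "screen_inv \<sigma> \<lparr>stR = {}, stp = (\<lambda>_. B), stU = {}, stPrev = (\<lambda>_. {}), stCur = (\<lambda>_. {}),
      stTrace = [], stSteps = 0, stHalt = False\<rparr> ord"
    using distinct_ord set_ord by (simp add: screen_inv_def follows_strategy_def)
  then have inv: "screen_inv \<sigma> (init_state ord B \<sigma>) []"
    unfolding init_state_def by (rule screen_inv_screen)
  then have "selected (init_state ord B \<sigma>) = {}"
    by (simp add: screen_inv_def selected_def)
  then show ?thesis
    using inv Vmax_nonneg B_pos
    by (auto simp: screen_inv_def sound_state_def sets_within_N_def prices_bounded_def
        within_budget_def u_star_ok_def prices_below_offers_def rejected_excluded_def
        costs_covered_def)
qed

lemma sound_state_run:
  assumes "\<forall>w\<in>X. \<sigma> w = truthful c w"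
  shows "sound_state X \<sigma> (run \<sigma> t)"
proof (induction t)
  case 0
  then show ?case
    by (simp add: sound_state_init)
next
  case (Suc t)
  then have "round_inv (rho (Suc t)) X \<sigma> (run \<sigma> (Suc t)) []"
    using round_inv_sweep[OF round_inv_round_start rho_pos assms] by (simp add: run_round_eq)
  then show ?case
    by (simp add: round_inv_def)
qed

lemma round_inv_run:
  assumes "\<forall>w\<in>X. \<sigma> w = truthful c w"
  shows "round_inv (rho (Suc t)) X \<sigma> (run \<sigma> (Suc t)) []"
  using round_inv_sweep[OF round_inv_round_start[OF sound_state_run] rho_pos] assms
  by (simp add: run_round_eq)

lemma halted_run_rho_bounds:
  assumes "stHalt (run \<sigma> (Suc t))"
  shows "rho (Suc t) < Vmax * (1 + real (card N))"
    and "\<sigma> = truthful c \<Longrightarrow> rho (Suc t) < 2 * OPT N v c B"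
  using assms round_inv_run[of "{}" \<sigma> t] round_inv_run[of N "truthful c" t]
  by (auto simp: round_inv_def halt_bound_def)

section \<open>Termination\<close>

definition round_progress :: "'a mstate \<Rightarrow> 'a mstate \<Rightarrow> bool" where
  "round_progress s s' \<longleftrightarrow>
     stR s' \<subseteq> stR s \<and> (\<forall>i. stCur s i \<subseteq> stCur s' i) \<and> stU s' = stU s \<and> stPrev s' = stPrev s"

definition dealt_with :: "'a \<Rightarrow> 'a mstate \<Rightarrow> bool" where
  "dealt_with u s \<longleftrightarrow> u \<notin> stR s \<or> (\<exists>i\<in>{1..l}. u \<in> stCur s i)"

lemma round_progress_trans: "round_progress s s' \<Longrightarrow> round_progress s' s'' \<Longrightarrow> round_progress s s''"
  unfolding round_progress_def by (fastforce simp: subset_iff)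

lemma dealt_with_progress: "dealt_with u s \<Longrightarrow> round_progress s s' \<Longrightarrow> dealt_with u s'"
  unfolding dealt_with_def round_progress_def by blast

lemma process_unhalted:
  assumes "\<not> stHalt (process \<rho> \<sigma> s u)"
  shows "\<not> stHalt s" and "round_progress s (process \<rho> \<sigma> s u)" and "dealt_with u (process \<rho> \<sigma> s u)"
proof -
  show nh: "\<not> stHalt s"
    using assms process_halted by metis
  show "round_progress s (process \<rho> \<sigma> s u)" "dealt_with u (process \<rho> \<sigma> s u)"
    using assms best_slot_in_range[of s u]
    by (auto simp: process_eq[OF nh] round_progress_def dealt_with_def split: if_splits)
qed

lemma sweep_halted: "stHalt s \<Longrightarrow> sweep \<rho> \<sigma> xs s = s"
  by (induction xs) (simp_all add: process_halted)

lemma sweep_unhalted: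
  assumes "\<not> stHalt (sweep \<rho> \<sigma> xs s)"
  shows "round_progress s (sweep \<rho> \<sigma> xs s) \<and> (\<forall>u\<in>set xs. dealt_with u (sweep \<rho> \<sigma> xs s))"
  using assms
proof (induction xs arbitrary: s)
  case Nil
  then show ?case
    by (simp add: round_progress_def)
next
  case (Cons x xs)
  let ?s1 = "process \<rho> \<sigma> s x"
  have "\<not> stHalt ?s1"
    using Cons.prems sweep_halted by fastforce
  with Cons show ?case
    using process_unhalted dealt_with_progress round_progress_trans by simp blast
qed

lemma stop_cond_if_unhalted:
  assumes "\<not> stHalt (run \<sigma> (Suc t))"
  shows "stop_cond l (run \<sigma> (Suc t))"
proof -
  let ?st = "run \<sigma> t"
  have run: "run \<sigma> (Suc t) = sweep (rho (Suc t)) \<sigma> (pending ?st) (round_start ?st)"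
    by (simp add: run_round_eq)
  have progress: "round_progress (round_start ?st) (run \<sigma> (Suc t))"
    and dealt: "\<forall>u\<in>set (pending ?st). dealt_with u (run \<sigma> (Suc t))"
    using sweep_unhalted assms unfolding run by blast+
  have "stR ?st \<subseteq> N"
    using sound_state_run[of "{}" \<sigma> t] by (simp add: sound_state_def sets_within_N_def)
  then show ?thesis
    using progress dealt set_ord
    by (fastforce simp: stop_cond_def round_progress_def dealt_with_def pending_def round_start_def)
qed

lemma terminates: "\<exists>t\<ge>1. stop_cond l (run \<sigma> t)"
proof -
  obtain n where "Vmax * (1 + real (card N)) / \<epsilon> < \<alpha> ^ n"
    using real_arch_pow[OF alpha_gt_1] by blast
  then have "Vmax * (1 + real (card N)) < rho (Suc n)"
    using eps_pos by (simp add: rho_Suc pos_divide_less_eq mult.commute)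
  then have "\<not> stHalt (run \<sigma> (Suc n))"
    using halted_run_rho_bounds(1) by fastforce
  then have "stop_cond l (run \<sigma> (Suc n))"
    by (rule stop_cond_if_unhalted)
  then show ?thesis
    by (intro exI[of _ "Suc n"]) simp
qed

lemma last_round_ge_1: "1 \<le> last_round \<sigma>"
  and stop_cond_last_round: "stop_cond l (run \<sigma> (last_round \<sigma>))"
  using LeastI_ex[OF terminates] unfolding num_rounds_def by auto

lemma not_stop_cond_before_last_round: "1 \<le> t \<Longrightarrow> t < last_round \<sigma> \<Longrightarrow> \<not> stop_cond l (run \<sigma> t)"
  using not_less_Least unfolding num_rounds_def by blast

lemma sound_state_final: "\<forall>w\<in>X. \<sigma> w = truthful c w \<Longrightarrow> sound_state X \<sigma> (final \<sigma>)"
  unfolding final_state_def by (rule sound_state_run)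

lemma final_eq_if_follows:
  assumes "follows_strategy \<sigma>' (mech_trace v ord B \<alpha> \<beta> \<epsilon> l \<sigma>)"
  shows "final \<sigma>' = final \<sigma>"
proof -
  have agree: "run \<sigma>' t = run \<sigma> t" if "t \<le> last_round \<sigma>" for t
    using run_eq_if_follows assms that unfolding mech_trace_def final_state_def by blast
  have "last_round \<sigma>' = last_round \<sigma>"
    unfolding num_rounds_def[of v ord B \<alpha> \<beta> \<epsilon> l \<sigma>']
  proof (rule Least_equality)
    show "1 \<le> last_round \<sigma> \<and> stop_cond l (run \<sigma>' (last_round \<sigma>))"
      using last_round_ge_1 stop_cond_last_round agree by simp
    show "last_round \<sigma> \<le> t" if "1 \<le> t \<and> stop_cond l (run \<sigma>' t)" for t
    proof (rule ccontr)
      assume "\<not> last_round \<sigma> \<le> t"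
      then show False
        using that agree[of t] not_stop_cond_before_last_round[of t \<sigma>] by simp
    qed
  qed
  then show ?thesis
    unfolding final_state_def using agree by simp
qed

section \<open>Outcome properties\<close>

abbreviation winner_set :: "('a \<Rightarrow> 'a strategy) \<Rightarrow> 'a set" where
  "winner_set \<sigma> \<equiv> winners v ord B \<alpha> \<beta> \<epsilon> l \<sigma>"

abbreviation util :: "('a \<Rightarrow> 'a strategy) \<Rightarrow> 'a \<Rightarrow> real" where
  "util \<sigma> u \<equiv> seller_util v ord B \<alpha> \<beta> \<epsilon> l c \<sigma> u"

lemma payment_final: "payment v ord B \<alpha> \<beta> \<epsilon> l \<sigma> = stp (final \<sigma>)"
  unfolding payment_def ..

lemma winner_set_best_candidate:
  "winner_set \<sigma> \<in> stPrev (final \<sigma>) ` {1..l} \<union> stCur (final \<sigma>) ` {1..l} \<union> {stU (final \<sigma>)}"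
  "v (stU (final \<sigma>)) - sum (stp (final \<sigma>)) (stU (final \<sigma>))
     \<le> v (winner_set \<sigma>) - sum (stp (final \<sigma>)) (winner_set \<sigma>)"
proof -
  let ?f = "\<lambda>A. v A - sum (stp (final \<sigma>)) A" and ?cs = "candidates l (final \<sigma>)"
  have W: "winner_set \<sigma> = first_argmax ?f ?cs"
    by (simp add: winners_def Let_def)
  have cs: "set ?cs = stPrev (final \<sigma>) ` {1..l} \<union> stCur (final \<sigma>) ` {1..l} \<union> {stU (final \<sigma>)}"
    by (auto simp: candidates_def atLeastLessThanSuc_atLeastAtMost)
  have "?cs \<noteq> []"
    by (simp add: candidates_def)
  from first_argmax_mem_max[OF this, of ?f]
  show "winner_set \<sigma> \<in> stPrev (final \<sigma>) ` {1..l} \<union> stCur (final \<sigma>) ` {1..l} \<union> {stU (final \<sigma>)}"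
    "?f (stU (final \<sigma>)) \<le> ?f (winner_set \<sigma>)"
    unfolding W cs by auto
qed

lemma winner_set_selected: "winner_set \<sigma> \<subseteq> selected (final \<sigma>)"
  using winner_set_best_candidate(1)[of \<sigma>] by (auto simp: selected_def)

lemma budget_feasible: "sum (payment v ord B \<alpha> \<beta> \<epsilon> l \<sigma>) (winner_set \<sigma>) \<le> B"
proof -
  have "sound_state {} \<sigma> (final \<sigma>)"
    by (simp add: sound_state_final)
  then have "within_budget (final \<sigma>)" and "u_star_ok (final \<sigma>)" and "prices_bounded (final \<sigma>)"
    by (simp_all add: sound_state_def)
  then show ?thesis
    using winner_set_best_candidate(1)[of \<sigma>] B_pos
    by (auto simp: payment_final within_budget_def u_star_ok_def prices_bounded_def)
qed

lemma surplus_nonneg: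
  "0 \<le> v (winner_set \<sigma>) - sum (payment v ord B \<alpha> \<beta> \<epsilon> l \<sigma>) (winner_set \<sigma>)"
proof -
  have "u_star_ok (final \<sigma>)"
    using sound_state_final[of "{}" \<sigma>] by (simp add: sound_state_def)
  then have "0 \<le> v (stU (final \<sigma>)) - sum (stp (final \<sigma>)) (stU (final \<sigma>))"
    using v_empty by (auto simp: u_star_ok_def)
  then show ?thesis
    using winner_set_best_candidate(2)[of \<sigma>] by (simp add: payment_final)
qed

lemma mech_trace_follows: "follows_strategy \<sigma> (mech_trace v ord B \<alpha> \<beta> \<epsilon> l \<sigma>)"
  using sound_state_final[of "{}" \<sigma>] by (simp add: sound_state_def mech_trace_def)

lemma individually_rational: "0 \<le> util (\<sigma>(u := truthful c u)) u"
proof -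
  let ?\<sigma> = "\<sigma>(u := truthful c u)"
  have "costs_covered {u} (final ?\<sigma>)"
    using sound_state_final[of "{u}" ?\<sigma>] by (simp add: sound_state_def)
  then show ?thesis
    using winner_set_selected[of ?\<sigma>]
    by (auto simp: seller_util_def payment_final costs_covered_def)
qed

lemma untruthful_answer_util_nonpos:
  assumes "(u, q, b) \<in> set (mech_trace v ord B \<alpha> \<beta> \<epsilon> l \<sigma>)" and "b \<noteq> (c u \<le> q)"
  shows "util \<sigma> u \<le> 0"
proof -
  have sound: "rejected_excluded (final \<sigma>)" "prices_below_offers (final \<sigma>)"
    using sound_state_final[of "{}" \<sigma>] by (simp_all add: sound_state_def)
  show ?thesis
  proof (cases b)
    case False
    then have "u \<notin> winner_set \<sigma>"
      using assms(1) sound(1) winner_set_selected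
      by (fastforce simp: rejected_excluded_def mech_trace_def)
    then show ?thesis
      by (simp add: seller_util_def)
  next
    case True
    then have "stp (final \<sigma>) u < c u"
      using assms sound(2) by (fastforce simp: prices_below_offers_def mech_trace_def)
    then show ?thesis
      by (simp add: seller_util_def payment_final)
  qed
qed

lemma truthful_dominant: "util (\<sigma>(u := d)) u \<le> util (\<sigma>(u := truthful c u)) u"
proof (cases "\<exists>q b. (u, q, b) \<in> set (mech_trace v ord B \<alpha> \<beta> \<epsilon> l (\<sigma>(u := d))) \<and> b \<noteq> (c u \<le> q)")
  case True
  then obtain q b where "(u, q, b) \<in> set (mech_trace v ord B \<alpha> \<beta> \<epsilon> l (\<sigma>(u := d)))" "b \<noteq> (c u \<le> q)"
    by blast
  then have "util (\<sigma>(u := d)) u \<le> 0"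
    by (rule untruthful_answer_util_nonpos)
  then show ?thesis
    using individually_rational[of \<sigma> u] by linarith
next
  case False
  have "follows_strategy (\<sigma>(u := truthful c u)) (mech_trace v ord B \<alpha> \<beta> \<epsilon> l (\<sigma>(u := d)))"
    using False by (intro follows_strategy_truthful_update[where d = d] mech_trace_follows) blast
  then have "final (\<sigma>(u := truthful c u)) = final (\<sigma>(u := d))"
    by (rule final_eq_if_follows)
  then show ?thesis
    by (simp add: seller_util_def winners_def payment_def)
qed

lemma obviously_strategyproof: "OSP N v ord B \<alpha> \<beta> \<epsilon> l c"
  unfolding OSP_def
proof (intro ballI allI impI)
  fix u d \<sigma>1 \<sigma>2 h1 h2 q b1 b2
  assume H: "prefix (h1 @ [(u, q, b1)]) (mech_trace v ord B \<alpha> \<beta> \<epsilon> l (\<sigma>1(u := truthful c u))) \<and>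
    prefix (h2 @ [(u, q, b2)]) (mech_trace v ord B \<alpha> \<beta> \<epsilon> l (\<sigma>2(u := d))) \<and>
    own_view u h1 = own_view u h2 \<and> d h2 q \<noteq> truthful c u h1 q"
  let ?tr = "mech_trace v ord B \<alpha> \<beta> \<epsilon> l (\<sigma>2(u := d))"
  have "follows_strategy (\<sigma>2(u := d)) (h2 @ [(u, q, b2)])"
    using H mech_trace_follows by (blast intro: follows_strategy_prefix)
  then have "b2 \<noteq> (c u \<le> q)"
    using H by (simp add: follows_strategy_snoc truthful_def)
  moreover have "(u, q, b2) \<in> set ?tr"
    using H by (auto simp: prefix_def)
  ultimately have "util (\<sigma>2(u := d)) u \<le> 0"
    by (intro untruthful_answer_util_nonpos)
  then show "util (\<sigma>2(u := d)) u \<le> util (\<sigma>1(u := truthful c u)) u"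
    using individually_rational[of \<sigma>1 u] by linarith
qed

section \<open>Running time\<close>

lemma steps_sweep: "stSteps (sweep \<rho> \<sigma> xs s) \<le> stSteps s + (2 * l + 2) * length xs"
proof (induction xs arbitrary: s)
  case (Cons x xs)
  have "stSteps (sweep \<rho> \<sigma> xs (process \<rho> \<sigma> s x)) \<le> stSteps (process \<rho> \<sigma> s x) + (2 * l + 2) * length xs"
    by (rule Cons.IH)
  then show ?case
    using steps_process[of \<rho> \<sigma> s x] by simp
qed simp

lemma steps_run: "stSteps (run \<sigma> t) \<le> length ord + t * ((2 * l + 2) * length ord)"
proof (induction t)
  case 0
  have "stSteps (screen \<sigma> xs s) = stSteps s + length xs" for xs s
    by (induction xs arbitrary: s) (simp_all add: offer_B_def Let_def)
  then show ?case
    by (simp add: init_state_def)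
next
  case (Suc t)
  have "stSteps (run \<sigma> (Suc t))
      \<le> stSteps (round_start (run \<sigma> t)) + (2 * l + 2) * length (pending (run \<sigma> t))"
    using steps_sweep by (simp add: run_round_eq)
  also have "\<dots> \<le> stSteps (run \<sigma> t) + (2 * l + 2) * length ord"
  proof -
    have "length (pending (run \<sigma> t)) \<le> length ord"
      unfolding pending_def by (rule length_filter_le)
    then have "(2 * l + 2) * length (pending (run \<sigma> t)) \<le> (2 * l + 2) * length ord"
      by (rule mult_le_mono2)
    then show ?thesis
      by (simp add: round_start_def)
  qed
  finally show ?case
    using Suc by simp
qed

lemma early_round_below_OPT:
  assumes "Suc t < last_round (truthful c)"
  shows "\<epsilon> * \<alpha> ^ t < 2 * OPT N v c B"
proof -
  have "stHalt (run (truthful c) (Suc t))"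
    using not_stop_cond_before_last_round[OF _ assms] stop_cond_if_unhalted by auto
  then show ?thesis
    using halted_run_rho_bounds(2) by (simp add: rho_Suc)
qed

lemma last_round_le_log:
  "real (last_round (truthful c)) \<le> (2 + 2 / ln \<alpha>) * max 1 (ln (OPT N v c B / \<epsilon>))"
proof -
  let ?L = "max 1 (ln (OPT N v c B / \<epsilon>))"
  have ln_pos: "0 < ln \<alpha>"
    using alpha_gt_1 by simp
  have L: "1 \<le> ?L" "0 \<le> 2 * ?L / ln \<alpha>"
    using ln_pos by simp_all
  show ?thesis
  proof (cases "last_round (truthful c) \<le> 1")
    case True
    then show ?thesis
      using L by (simp add: algebra_simps)
  next
    case False
    define t where "t = last_round (truthful c) - 2"
    with False have t: "last_round (truthful c) = Suc (Suc t)"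
      by simp
    then have "real t \<le> 2 * ?L / ln \<alpha>"
      using early_round_below_OPT[of t] by (intro exponent_le_log_bound alpha_gt_1 eps_pos) simp
    then show ?thesis
      using t L by (simp add: algebra_simps)
  qed
qed

lemma total_steps_le:
  "real (total_steps v ord B \<alpha> \<beta> \<epsilon> l (truthful c))
     \<le> (6 * (2 + 2 / ln \<alpha>) + 5) * (real (card N) + 1) * max 1 (ln (OPT N v c B / \<epsilon>))"
proof -
  let ?M = "last_round (truthful c)" and ?L = "max 1 (ln (OPT N v c B / \<epsilon>))" and ?n = "card N"
  have n: "length ord = ?n"
    using distinct_ord set_ord distinct_card by fastforce
  have "stSteps (final (truthful c)) \<le> ?n + ?M * ((2 * l + 2) * ?n)"
    unfolding final_state_def using steps_run[of "truthful c" ?M] n by simp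
  also have "\<dots> \<le> ?n + ?M * (6 * ?n)"
    using l_le_2 by (intro add_left_mono mult_le_mono2) simp
  finally have "total_steps v ord B \<alpha> \<beta> \<epsilon> l (truthful c) \<le> ?n + ?M * (6 * ?n) + 5"
    using l_le_2 by (simp add: total_steps_def candidates_def)
  then have "real (total_steps v ord B \<alpha> \<beta> \<epsilon> l (truthful c)) \<le> real (?n + ?M * (6 * ?n) + 5)"
    by (simp only: of_nat_le_iff)
  also have "\<dots> \<le> (real ?n + 1) * (6 * real ?M + 5)"
    by (simp add: algebra_simps)
  also have "\<dots> \<le> (real ?n + 1) * (6 * ((2 + 2 / ln \<alpha>) * ?L) + 5 * ?L)"
    using last_round_le_log by (intro mult_left_mono add_mono) auto
  finally show ?thesis
    by (simp add: algebra_simps)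
qed

end

theorem theorem4p1:
  fixes \<alpha> :: real
  assumes "1 < \<alpha>"
  shows "\<exists>C :: real. \<forall>(N :: 'a set) ord v c B \<beta> \<epsilon> l.
    valid_instance N ord v c B \<alpha> \<beta> \<epsilon> l \<longrightarrow>
      (\<forall>\<sigma>. \<exists>t\<ge>1. stop_cond l (rounds v ord B \<alpha> \<beta> \<epsilon> l \<sigma> t)) \<and>
      (\<forall>\<sigma>. sum (payment v ord B \<alpha> \<beta> \<epsilon> l \<sigma>) (winners v ord B \<alpha> \<beta> \<epsilon> l \<sigma>) \<le> B) \<and>
      (\<forall>\<sigma>. 0 \<le> v (winners v ord B \<alpha> \<beta> \<epsilon> l \<sigma>)
                 - sum (payment v ord B \<alpha> \<beta> \<epsilon> l \<sigma>) (winners v ord B \<alpha> \<beta> \<epsilon> l \<sigma>)) \<and>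
      OSP N v ord B \<alpha> \<beta> \<epsilon> l c \<and>
      (\<forall>u\<in>N. \<forall>\<sigma> d. seller_util v ord B \<alpha> \<beta> \<epsilon> l c (\<sigma>(u := d)) u
                      \<le> seller_util v ord B \<alpha> \<beta> \<epsilon> l c (\<sigma>(u := truthful c u)) u) \<and>
      (\<forall>u\<in>N. \<forall>\<sigma>. 0 \<le> seller_util v ord B \<alpha> \<beta> \<epsilon> l c (\<sigma>(u := truthful c u)) u) \<and>
      real (total_steps v ord B \<alpha> \<beta> \<epsilon> l (truthful c))
        \<le> C * (real (card N) + 1) * max 1 (ln (OPT N v c B / \<epsilon>))"
  apply (rule exI[of _ "6 * (2 + 2 / ln \<alpha>) + 5"], intro allI impI)
  subgoal premises valid for N ord v c B \<beta> \<epsilon> l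
  proof -
    interpret bfm v ord B \<alpha> \<beta> \<epsilon> l N c
      using valid by unfold_locales
    show ?thesis
      using terminates budget_feasible surplus_nonneg obviously_strategyproof truthful_dominant
        individually_rational total_steps_le
      by blast
  qed
  done

end
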